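(* A subset $A$ of nonzero elements of a real normed space $X$ is topologically linearly independent if and only if it is uniformly minimal.
   Context: $X$ carries its norm topology. A subset $A\subseteq X\setminus\{0\}$ is topologically linearly independent if for every neighborhood $W$ of $0$ there is a neighborhood $U$ of $0$ such that for every finite $F\subseteq A$ and reals $\{r_a: a\in F\}$, $\sum_{a\in F}r_a a\in U$ implies $r_a a\in W$ for all $a\in F$. A subset $A\subseteq X\setminus\{0\}$ is uniformly minimal if there exists $K>0$ such that for every $a\in A$, $\operatorname{dist}\bigl(a/\|a\|,\ \overline{\langle A\setminus\{a\}\rangle_{\mathbb{R}}}\bigr)\ge K$, where $\langle\cdot\rangle_{\mathbb{R}}$ denotes linear span and the bar denotes norm closure. *)

theory Defs
  imports "HOL-Analysis.Analysis"
begin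

definition top_lin_indep :: "'a::real_normed_vector set \<Rightarrow> bool" where
  "top_lin_indep A \<longleftrightarrow> 0 \<notin> A \<and>
     (\<forall>W. open W \<and> 0 \<in> W \<longrightarrow>
        (\<exists>U. open U \<and> 0 \<in> U \<and>
          (\<forall>F r. finite F \<and> F \<subseteq> A \<and> (\<Sum>a\<in>F. r a *\<^sub>R a) \<in> U \<longrightarrow>
                 (\<forall>a\<in>F. r a *\<^sub>R a \<in> W))))"

definition uniformly_minimal :: "'a::real_normed_vector set \<Rightarrow> bool" where
  "uniformly_minimal A \<longleftrightarrow> 0 \<notin> A \<and>
     (\<exists>K>0. \<forall>a\<in>A. infdist (a /\<^sub>R norm a) (closure (span (A - {a}))) \<ge> K)"

end

theory Submission
  imports Defs
begin

text \<open>Both notions say that the coefficient functionals on the span of A are uniformly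
bounded: A is uniformly minimal with constant K iff K \<parallel>c a\<parallel> \<le> \<parallel>c a + y\<parallel> for all
a \<in> A, scalars c and y in the span of the other vectors. Such a bound gives topological
linear independence with U = ball 0 (K e) for W \<supseteq> ball 0 e; conversely, applying
topological linear independence to W = ball 0 1 and rescaling gives the bound with K the
radius of a ball inside U.\<close>

definition uniform_coefficient_bound :: "'a::real_normed_vector set \<Rightarrow> real \<Rightarrow> bool" where
  "uniform_coefficient_bound A K \<longleftrightarrow>
     (\<forall>a\<in>A. \<forall>c. \<forall>y\<in>span (A - {a}). K * norm (c *\<^sub>R a) \<le> norm (c *\<^sub>R a + y))"

lemma infdist_closure: "infdist x (closure S) = infdist x S"
  by (simp add: infdist_eq_setdist)

lemma le_infdist_iff:
  assumes "S \<noteq> {}"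
  shows "K \<le> infdist x S \<longleftrightarrow> (\<forall>y\<in>S. K \<le> dist x y)"
  using assms by (simp add: infdist_notempty le_cINF_iff)

lemma dist_normalized_ge_iff_scaled_bound:
  fixes a :: "'a::real_normed_vector"
  assumes "a \<noteq> 0" "subspace S"
  shows "(\<forall>y\<in>S. K \<le> dist (a /\<^sub>R norm a) y) \<longleftrightarrow>
         (\<forall>c. \<forall>y\<in>S. K * norm (c *\<^sub>R a) \<le> norm (c *\<^sub>R a + y))"
proof
  assume dist_bound: "\<forall>y\<in>S. K \<le> dist (a /\<^sub>R norm a) y"
  show "\<forall>c. \<forall>y\<in>S. K * norm (c *\<^sub>R a) \<le> norm (c *\<^sub>R a + y)"
  proof (intro allI ballI)
    fix c y assume y: "y \<in> S"
    show "K * norm (c *\<^sub>R a) \<le> norm (c *\<^sub>R a + y)"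
    proof (cases "c = 0")
      case False
      have na: "norm a > 0" using assms(1) by simp
      define z where "z = - (y /\<^sub>R (c * norm a))"
      have "z \<in> S" unfolding z_def using assms(2) y by (intro subspace_neg subspace_scale)
      then have "K \<le> norm (a /\<^sub>R norm a - z)" using dist_bound by (simp add: dist_norm)
      also have "a /\<^sub>R norm a - z = (c *\<^sub>R a + y) /\<^sub>R (c * norm a)"
        using False na by (simp add: z_def scaleR_add_right)
      also have "norm \<dots> = norm (c *\<^sub>R a + y) / norm (c *\<^sub>R a)"
        by (simp add: abs_mult divide_inverse mult_ac)
      finally show ?thesis using False na by (simp add: pos_le_divide_eq)
    qed simp
  qed
next
  assume scaled_bound: "\<forall>c. \<forall>y\<in>S. K * norm (c *\<^sub>R a) \<le> norm (c *\<^sub>R a + y)"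
  show "\<forall>y\<in>S. K \<le> dist (a /\<^sub>R norm a) y"
  proof
    fix y assume "y \<in> S"
    then have "K * norm ((1 / norm a) *\<^sub>R a) \<le> norm ((1 / norm a) *\<^sub>R a + - y)"
      using scaled_bound assms(2) subspace_neg by blast
    then show "K \<le> dist (a /\<^sub>R norm a) y"
      using assms(1) by (simp add: dist_norm divide_inverse)
  qed
qed

lemma uniformly_minimal_iff_coefficient_bound:
  "uniformly_minimal A \<longleftrightarrow> 0 \<notin> A \<and> (\<exists>K>0. uniform_coefficient_bound A K)"
proof -
  have "K \<le> infdist (a /\<^sub>R norm a) (closure (span (A - {a}))) \<longleftrightarrow>
        (\<forall>c. \<forall>y\<in>span (A - {a}). K * norm (c *\<^sub>R a) \<le> norm (c *\<^sub>R a + y))"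
    if "a \<in> A" "0 \<notin> A" for a K
  proof -
    have "span (A - {a}) \<noteq> {}" using span_zero by blast
    then have "K \<le> infdist (a /\<^sub>R norm a) (closure (span (A - {a}))) \<longleftrightarrow>
               (\<forall>y\<in>span (A - {a}). K \<le> dist (a /\<^sub>R norm a) y)"
      by (simp add: infdist_closure le_infdist_iff)
    also have "\<dots> \<longleftrightarrow> (\<forall>c. \<forall>y\<in>span (A - {a}). K * norm (c *\<^sub>R a) \<le> norm (c *\<^sub>R a + y))"
      using that by (intro dist_normalized_ge_iff_scaled_bound) auto
    finally show ?thesis .
  qed
  then show ?thesis
    unfolding uniformly_minimal_def uniform_coefficient_bound_def by auto
qed

lemma zero_nhds_iff_balls:
  fixes P :: "'a::real_normed_vector set \<Rightarrow> 'a set \<Rightarrow> bool"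
  assumes mono: "\<And>U U' W W'. U' \<subseteq> U \<Longrightarrow> W \<subseteq> W' \<Longrightarrow> P U W \<Longrightarrow> P U' W'"
  shows "(\<forall>W. open W \<and> 0 \<in> W \<longrightarrow> (\<exists>U. open U \<and> 0 \<in> U \<and> P U W)) \<longleftrightarrow>
         (\<forall>e>0. \<exists>d>0. P (ball 0 d) (ball 0 e))"
proof
  assume nhds: "\<forall>W. open W \<and> 0 \<in> W \<longrightarrow> (\<exists>U. open U \<and> 0 \<in> U \<and> P U W)"
  show "\<forall>e>0. \<exists>d>0. P (ball 0 d) (ball 0 e)"
  proof (intro allI impI)
    fix e :: real assume "e > 0"
    then obtain U where "open U" "0 \<in> U" "P U (ball 0 e)"
      using nhds[rule_format, of "ball 0 e"] by auto
    moreover obtain d where "d > 0" "ball 0 d \<subseteq> U"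
      using \<open>open U\<close> \<open>0 \<in> U\<close> open_contains_ball by blast
    ultimately show "\<exists>d>0. P (ball 0 d) (ball 0 e)" using mono by blast
  qed
next
  assume balls: "\<forall>e>0. \<exists>d>0. P (ball 0 d) (ball 0 e)"
  show "\<forall>W. open W \<and> 0 \<in> W \<longrightarrow> (\<exists>U. open U \<and> 0 \<in> U \<and> P U W)"
  proof (intro allI impI)
    fix W :: "'a set" assume "open W \<and> 0 \<in> W"
    then obtain e where "e > 0" "ball 0 e \<subseteq> W" using open_contains_ball by blast
    then obtain d where "d > 0" "P (ball 0 d) W" using balls mono by blast
    then show "\<exists>U. open U \<and> 0 \<in> U \<and> P U W" by (intro exI[of _ "ball 0 d"]) auto
  qed
qed

lemma top_lin_indep_iff_balls:
  "top_lin_indep A \<longleftrightarrow> 0 \<notin> A \<and>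
     (\<forall>e>0. \<exists>d>0. \<forall>F r. finite F \<and> F \<subseteq> A \<and> norm (\<Sum>a\<in>F. r a *\<^sub>R a) < d \<longrightarrow>
        (\<forall>a\<in>F. norm (r a *\<^sub>R a) < e))"
proof -
  have "(\<forall>W. open W \<and> 0 \<in> W \<longrightarrow> (\<exists>U. open U \<and> 0 \<in> U \<and>
          (\<forall>F r. finite F \<and> F \<subseteq> A \<and> (\<Sum>a\<in>F. r a *\<^sub>R a) \<in> U \<longrightarrow> (\<forall>a\<in>F. r a *\<^sub>R a \<in> W)))) \<longleftrightarrow>
        (\<forall>e>0. \<exists>d>0. \<forall>F r. finite F \<and> F \<subseteq> A \<and> (\<Sum>a\<in>F. r a *\<^sub>R a) \<in> ball 0 d \<longrightarrow>
          (\<forall>a\<in>F. r a *\<^sub>R a \<in> ball 0 e))"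
    by (rule zero_nhds_iff_balls) blast
  then show ?thesis unfolding top_lin_indep_def by simp
qed

lemma sum_split_off_span_diff:
  assumes "finite F" "a \<in> F" "F \<subseteq> A"
  shows "(\<Sum>b\<in>F. r b *\<^sub>R b) = r a *\<^sub>R a + (\<Sum>b\<in>F - {a}. r b *\<^sub>R b)"
    and "(\<Sum>b\<in>F - {a}. r b *\<^sub>R b) \<in> span (A - {a})"
proof -
  show "(\<Sum>b\<in>F. r b *\<^sub>R b) = r a *\<^sub>R a + (\<Sum>b\<in>F - {a}. r b *\<^sub>R b)"
    using assms by (simp add: sum.remove)
  show "(\<Sum>b\<in>F - {a}. r b *\<^sub>R b) \<in> span (A - {a})"
    using assms by (intro span_sum span_scale span_base) auto
qed

lemma sum_insert_of_span_diff:
  assumes "a \<in> A" "y \<in> span (A - {a})"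
  obtains F r where "finite F" "F \<subseteq> A" "a \<in> F" "r a = c" "(\<Sum>b\<in>F. r b *\<^sub>R b) = c *\<^sub>R a + y"
proof -
  from assms(2) obtain G s where G: "finite G" "G \<subseteq> A - {a}" "(\<Sum>b\<in>G. s b *\<^sub>R b) = y"
    unfolding span_explicit by blast
  define r where "r = s(a := c)"
  have "(\<Sum>b\<in>G. r b *\<^sub>R b) = (\<Sum>b\<in>G. s b *\<^sub>R b)"
    using G(2) by (intro sum.cong) (auto simp: r_def)
  also have "\<dots> = y" by (fact G(3))
  finally have "(\<Sum>b\<in>G. r b *\<^sub>R b) = y" .
  then have "(\<Sum>b\<in>insert a G. r b *\<^sub>R b) = c *\<^sub>R a + y"
    using G by (subst sum.insert) (auto simp: r_def)
  then show ?thesis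
    using that[of "insert a G" r] G assms(1) by (auto simp: r_def)
qed

lemma top_lin_indep_if_coefficient_bound:
  assumes "uniform_coefficient_bound A K" "K > 0" "0 \<notin> A"
  shows "top_lin_indep A"
  unfolding top_lin_indep_iff_balls
proof (intro conjI allI impI)
  fix e :: real assume "e > 0"
  have "norm (r a *\<^sub>R a) < e"
    if "finite F" "F \<subseteq> A" "norm (\<Sum>a\<in>F. r a *\<^sub>R a) < K * e" "a \<in> F" for F r a
  proof -
    have "K * norm (r a *\<^sub>R a) \<le> norm (\<Sum>a\<in>F. r a *\<^sub>R a)"
      using assms(1) that sum_split_off_span_diff[OF that(1,4,2), of r]
      unfolding uniform_coefficient_bound_def by auto
    with assms(2) that(3) show ?thesis by (meson order_le_less_trans mult_less_cancel_left_pos)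
  qed
  then show "\<exists>d>0. \<forall>F r. finite F \<and> F \<subseteq> A \<and> norm (\<Sum>a\<in>F. r a *\<^sub>R a) < d \<longrightarrow>
      (\<forall>a\<in>F. norm (r a *\<^sub>R a) < e)"
    using assms(2) \<open>e > 0\<close> by (intro exI[of _ "K * e"]) auto
qed (fact assms(3))

lemma coefficient_bound_if_top_lin_indep:
  assumes "top_lin_indep A"
  obtains K where "K > 0" "uniform_coefficient_bound A K"
proof -
  have "\<forall>e>0. \<exists>d>0. \<forall>F r. finite F \<and> F \<subseteq> A \<and> norm (\<Sum>a\<in>F. r a *\<^sub>R a) < d \<longrightarrow>
      (\<forall>a\<in>F. norm (r a *\<^sub>R a) < e)"
    using assms unfolding top_lin_indep_iff_balls by (rule conjunct2)
  from this[rule_format, OF zero_less_one] obtain d where "d > 0" and small: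
    "\<forall>F r. finite F \<and> F \<subseteq> A \<and> norm (\<Sum>a\<in>F. r a *\<^sub>R a) < d \<longrightarrow> (\<forall>a\<in>F. norm (r a *\<^sub>R a) < 1)"
    by blast
  have "d * norm (c *\<^sub>R a) \<le> norm (c *\<^sub>R a + y)"
    if a: "a \<in> A" and y: "y \<in> span (A - {a})" for a c y
  proof (rule ccontr)
    assume less: "\<not> ?thesis"
    then have "norm (c *\<^sub>R a) > 0"
      using \<open>d > 0\<close> by (metis mult_eq_0_iff norm_ge_zero not_le order_le_less)
    text \<open>Rescale so that the a-coefficient term has norm exactly 1.\<close>
    define t where "t = 1 / norm (c *\<^sub>R a)"
    have "t *\<^sub>R y \<in> span (A - {a})" using y by (rule span_scale)
    obtain F r where F: "finite F" "F \<subseteq> A" "a \<in> F" "r a = t * c"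
      and sum: "(\<Sum>b\<in>F. r b *\<^sub>R b) = (t * c) *\<^sub>R a + t *\<^sub>R y"
      using sum_insert_of_span_diff[OF a \<open>t *\<^sub>R y \<in> _\<close>] by blast
    have "(\<Sum>b\<in>F. r b *\<^sub>R b) = t *\<^sub>R (c *\<^sub>R a + y)"
      by (simp add: sum scaleR_add_right)
    then have "norm (\<Sum>b\<in>F. r b *\<^sub>R b) = norm (c *\<^sub>R a + y) / norm (c *\<^sub>R a)"
      by (simp add: t_def)
    also have "\<dots> < d"
      using less \<open>norm (c *\<^sub>R a) > 0\<close> by (simp add: pos_divide_less_eq)
    finally have "norm (r a *\<^sub>R a) < 1" using small F by blast
    then show False using \<open>norm (c *\<^sub>R a) > 0\<close> by (simp add: F(4) t_def split: if_split_asm)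
  qed
  then show ?thesis
    using that \<open>d > 0\<close> unfolding uniform_coefficient_bound_def by blast
qed

theorem theorem4p5:
  fixes A :: "'a::real_normed_vector set"
  assumes "0 \<notin> A"
  shows "top_lin_indep A \<longleftrightarrow> uniformly_minimal A"
proof
  assume "top_lin_indep A"
  then obtain K where "K > 0" "uniform_coefficient_bound A K"
    by (rule coefficient_bound_if_top_lin_indep)
  with assms show "uniformly_minimal A"
    unfolding uniformly_minimal_iff_coefficient_bound by blast
next
  assume "uniformly_minimal A"
  then obtain K where "K > 0" "uniform_coefficient_bound A K"
    unfolding uniformly_minimal_iff_coefficient_bound by blast
  with assms show "top_lin_indep A"
    using top_lin_indep_if_coefficient_bound by blast
qed

end
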